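(* Let $(X,D,K)$ be a complete $b$-metric-like space with constant $K\ge1$, and let $\varphi:(0,\infty)\to(K^2,\infty)$ be a function such that for every sequence $\{t_n\}\subset(0,\infty)$, $\varphi(t_n)\to K^2$ from above implies $t_n\to 0$. Assume that $S,T:X\to X$ are onto mappings such that $$D(Tx,Sy)\geq \varphi\big(D(x,y)\big)\,D(x,y)$$ for all $x,y\in X$ with $D(x,y)>0$. Then $T$ and $S$ have a unique common fixed point.
   Context: A $b$-metric-like space $(X,D,K)$ is a set $X$ with a function $D:X\times X\to[0,\infty)$ and a constant $K\ge 1$ such that for all $x,y,z\in X$: (i) $D(x,y)=0\Rightarrow x=y$; (ii) $D(x,y)=D(y,x)$; (iii) $D(x,y)\le K[D(x,z)+D(z,y)]$. (Note $D(x,x)$ need not be $0$.) A sequence $\{x_n\}$ converges to $x$ if $\lim_{n\to\infty}D(x_n,x)=D(x,x)$. A sequence $\{x_n\}$ is Cauchy if $\lim_{n,m\to\infty}D(x_n,x_m)$ exists and is finite. The space is complete if every Cauchy sequence $\{x_n\}$ converges to some $x\in X$ with $\lim_{n,m\to\infty}D(x_n,x_m)=D(x,x)=\lim_{n\to\infty}D(x_n,x)$. *)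

theory Defs
  imports Complex_Main
begin

text \<open>b-metric-like space (X,D,K), X being the whole (nonempty) type 'a.\<close>
definition b_metric_like :: "('a \<Rightarrow> 'a \<Rightarrow> real) \<Rightarrow> real \<Rightarrow> bool" where
  "b_metric_like D K \<longleftrightarrow> K \<ge> 1 \<and> (\<forall>x y. D x y \<ge> 0) \<and> (\<forall>x y. D x y = 0 \<longrightarrow> x = y)
     \<and> (\<forall>x y. D x y = D y x) \<and> (\<forall>x y z. D x y \<le> K * (D x z + D z y))"

definition bml_double_limit :: "('a \<Rightarrow> 'a \<Rightarrow> real) \<Rightarrow> (nat \<Rightarrow> 'a) \<Rightarrow> real \<Rightarrow> bool" where
  "bml_double_limit D xs L \<longleftrightarrow>
     (\<forall>e>0. \<exists>N. \<forall>n m. n \<ge> N \<and> m \<ge> N \<longrightarrow> \<bar>D (xs n) (xs m) - L\<bar> < e)"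

definition bml_converges :: "('a \<Rightarrow> 'a \<Rightarrow> real) \<Rightarrow> (nat \<Rightarrow> 'a) \<Rightarrow> 'a \<Rightarrow> bool" where
  "bml_converges D xs x \<longleftrightarrow> (\<lambda>n. D (xs n) x) \<longlonglongrightarrow> D x x"

definition bml_cauchy :: "('a \<Rightarrow> 'a \<Rightarrow> real) \<Rightarrow> (nat \<Rightarrow> 'a) \<Rightarrow> bool" where
  "bml_cauchy D xs \<longleftrightarrow> (\<exists>L. bml_double_limit D xs L)"

definition bml_complete :: "('a \<Rightarrow> 'a \<Rightarrow> real) \<Rightarrow> bool" where
  "bml_complete D \<longleftrightarrow> (\<forall>xs. bml_cauchy D xs \<longrightarrow>
      (\<exists>x. bml_double_limit D xs (D x x) \<and> bml_converges D xs x))"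

end

theory Submission
  imports Defs
begin

text \<open>Surjectivity lets us run the maps backwards: pick a sequence with T x1 = x0, S x2 = x1,
  T x3 = x2, \<dots>. The contractive condition read backwards says that terms whose indices
  have opposite parity are pulled together by the factor \<phi> > K^2, which beats the loss K^2 of two
  applications of the relaxed triangle inequality; the hypothesis on \<phi> turns
  "the factor tends to K^2" into "the distances tend to 0". Hence the sequence is Cauchy
  with limit 0, its limit z satisfies D z z = 0, and since T and S expand distances a preimage
  of z under T (or S) is also a limit of the sequence, hence equal to z.\<close>

lemma bml_double_limit_unique:
  assumes "bml_double_limit D x L" and "bml_double_limit D x L'"
  shows "L = L'"
proof (rule ccontr)
  assume "L \<noteq> L'"
  then have "\<bar>L - L'\<bar> / 2 > 0" by simp
  then obtain N N' where
    "\<forall>n m. N \<le> n \<and> N \<le> m \<longrightarrow> \<bar>D (x n) (x m) - L\<bar> < \<bar>L - L'\<bar> / 2" and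
    "\<forall>n m. N' \<le> n \<and> N' \<le> m \<longrightarrow> \<bar>D (x n) (x m) - L'\<bar> < \<bar>L - L'\<bar> / 2"
    using assms unfolding bml_double_limit_def by meson
  then have "\<bar>D (x (N + N')) (x (N + N')) - L\<bar> < \<bar>L - L'\<bar> / 2"
    and "\<bar>D (x (N + N')) (x (N + N')) - L'\<bar> < \<bar>L - L'\<bar> / 2" by auto
  then show False by (auto simp: abs_less_iff abs_if split: if_splits)
qed

lemma alternating_preimage_seq:
  assumes "surj T" and "surj S"
  obtains x :: "nat \<Rightarrow> 'a"
  where "\<And>n. even n \<Longrightarrow> T (x (Suc n)) = x n" and "\<And>n. odd n \<Longrightarrow> S (x (Suc n)) = x n"
proof
  define x where "x = rec_nat undefined (\<lambda>n y. inv (if even n then T else S) y)"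
  have x_Suc: "x (Suc n) = inv (if even n then T else S) (x n)" for n
    unfolding x_def by simp
  show "T (x (Suc n)) = x n" if "even n" for n
    using that x_Suc surj_f_inv_f[OF assms(1)] by simp
  show "S (x (Suc n)) = x n" if "odd n" for n
    using that x_Suc surj_f_inv_f[OF assms(2)] by simp
qed

context
  fixes D :: "'a \<Rightarrow> 'a \<Rightarrow> real" and K :: real
  assumes bml: "b_metric_like D K"
begin

lemma bml_K_ge_1: "K \<ge> 1"
  using bml unfolding b_metric_like_def by blast

lemma bml_K2_ge_1: "K\<^sup>2 \<ge> 1"
  using bml_K_ge_1 by (simp add: one_le_power)

lemma bml_nonneg: "D x y \<ge> 0"
  using bml unfolding b_metric_like_def by blast

lemma bml_eq_0D: "D x y = 0 \<Longrightarrow> x = y"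
  using bml unfolding b_metric_like_def by blast

lemma bml_sym: "D x y = D y x"
  using bml unfolding b_metric_like_def by blast

lemma bml_triangle: "D x y \<le> K * (D x z + D z y)"
  using bml unfolding b_metric_like_def by blast

lemma bml_quadrangle: "D a b \<le> K * D a a' + K\<^sup>2 * D a' b' + K\<^sup>2 * D b' b"
proof -
  have "D a b \<le> K * (D a a' + D a' b)" by (rule bml_triangle)
  also have "\<dots> \<le> K * (D a a' + K * (D a' b' + D b' b))"
    using bml_triangle[of a' b b'] bml_K_ge_1 by simp
  finally show ?thesis by (simp add: algebra_simps power2_eq_square)
qed

lemma bml_limit_unique:
  assumes "(\<lambda>n. D (y n) u) \<longlonglongrightarrow> 0" and "(\<lambda>n. D (y n) z) \<longlonglongrightarrow> 0"
  shows "u = z"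
proof -
  have "(\<lambda>n. K * (D (y n) u + D (y n) z)) \<longlonglongrightarrow> K * (0 + 0)"
    using assms by (intro tendsto_intros)
  moreover have "D u z \<le> K * (D (y n) u + D (y n) z)" for n
    using bml_triangle[of u z "y n"] by (simp add: bml_sym)
  ultimately have "D u z \<le> 0"
    using LIMSEQ_le_const by fastforce
  then show ?thesis
    using bml_nonneg[of u z] bml_eq_0D by force
qed

lemma eq_limit_if_dominated:
  assumes "(\<lambda>n. D (w n) z) \<longlonglongrightarrow> 0" and "(\<lambda>n. D (y n) z) \<longlonglongrightarrow> 0"
    and "\<And>n. D (y n) u \<le> D (w n) z"
  shows "u = z"
proof -
  have "(\<lambda>n. D (y n) u) \<longlonglongrightarrow> 0"
  proof (rule tendsto_sandwich[OF _ _ tendsto_const assms(1)])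
    show "\<forall>\<^sub>F n in sequentially. 0 \<le> D (y n) u" using bml_nonneg by simp
    show "\<forall>\<^sub>F n in sequentially. D (y n) u \<le> D (w n) z" using assms(3) by simp
  qed
  then show ?thesis using assms(2) by (rule bml_limit_unique)
qed

lemma alternating_preimage_step:
  assumes expand: "\<And>a b. f (D a b) \<le> D (T a) (S b)"
    and T: "\<And>n. even n \<Longrightarrow> T (x (Suc n)) = x n"
    and S: "\<And>n. odd n \<Longrightarrow> S (x (Suc n)) = x n"
    and "odd (i + j)"
  shows "f (D (x (Suc i)) (x (Suc j))) \<le> D (x i) (x j)"
proof (cases "even i")
  case True
  with \<open>odd (i + j)\<close> have "odd j" by simp
  then show ?thesis using expand[of "x (Suc i)" "x (Suc j)"] T[OF True] S by simp
next
  case False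
  with \<open>odd (i + j)\<close> have "even j" by simp
  then show ?thesis
    using expand[of "x (Suc j)" "x (Suc i)"] T S[of i] False by (simp add: bml_sym)
qed

lemma fixed_point_of_limit:
  assumes expand: "\<And>a b. D a b \<le> D (T a) (S b)"
    and "surj T" and "surj S"
    and T: "\<And>n. even n \<Longrightarrow> T (x (Suc n)) = x n"
    and S: "\<And>n. odd n \<Longrightarrow> S (x (Suc n)) = x n"
    and lim: "(\<lambda>n. D (x n) z) \<longlonglongrightarrow> 0"
  shows "T z = z" and "S z = z"
proof -
  have sublim: "(\<lambda>n. D (x (g n)) z) \<longlonglongrightarrow> 0" if "strict_mono g" for g
    using filterlim_compose[OF lim filterlim_subseq[OF that]] by simp
  have mono: "strict_mono (\<lambda>n. 2 * n + c)" for c :: nat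
    by (simp add: strict_mono_def)
  obtain u where u: "T u = z" using \<open>surj T\<close> by (metis surjD)
  have dom_u: "D (x (2 * n + 2)) u \<le> D (x (2 * n + 1)) z" for n
    using expand[of u "x (2 * n + 2)"] S[of "2 * n + 1"] u by (simp add: bml_sym)
  have "u = z"
    by (rule eq_limit_if_dominated[of "\<lambda>n. x (2 * n + 1)" z "\<lambda>n. x (2 * n + 2)" u])
      (use sublim[OF mono, of 1] sublim[OF mono, of 2] dom_u in simp_all)
  then show "T z = z" using u by simp
  obtain v where v: "S v = z" using \<open>surj S\<close> by (metis surjD)
  have dom_v: "D (x (2 * n + 1)) v \<le> D (x (2 * n)) z" for n
    using expand[of "x (2 * n + 1)" v] T[of "2 * n"] v by simp
  have "v = z"
    by (rule eq_limit_if_dominated[of "\<lambda>n. x (2 * n)" z "\<lambda>n. x (2 * n + 1)" v])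
      (use sublim[OF mono, of 0] sublim[OF mono, of 1] dom_v in simp_all)
  then show "S z = z" using v by simp
qed

context
  fixes \<phi> :: "real \<Rightarrow> real"
  assumes phi_range: "\<And>t. t > 0 \<Longrightarrow> \<phi> t > K\<^sup>2"
    and phi_cond: "\<And>tt :: nat \<Rightarrow> real. (\<forall>n. tt n > 0) \<Longrightarrow>
                     (\<lambda>n. \<phi> (tt n)) \<longlonglongrightarrow> K\<^sup>2 \<Longrightarrow> tt \<longlonglongrightarrow> 0"
begin

lemma K2_mult_le_phi_mult:
  assumes "t \<ge> 0"
  shows "K\<^sup>2 * t \<le> \<phi> t * t"
proof (cases "t = 0")
  case False
  with assms phi_range[of t] show ?thesis by (simp add: mult_right_mono)
qed simp

lemma le_phi_mult:
  assumes "t \<ge> 0"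
  shows "t \<le> \<phi> t * t"
  using K2_mult_le_phi_mult[OF assms] mult_right_mono[OF bml_K2_ge_1 assms] by simp

lemma phi_mult_le_self_imp_zero:
  assumes "t \<ge> 0" and "\<phi> t * t \<le> t"
  shows "t = 0"
proof (rule ccontr)
  assume "t \<noteq> 0"
  with assms(1) have "t > 0" by simp
  then have "K\<^sup>2 * t < \<phi> t * t" using phi_range by simp
  moreover have "t \<le> K\<^sup>2 * t" using mult_right_mono[OF bml_K2_ge_1 assms(1)] by simp
  ultimately show False using assms(2) by simp
qed

lemma phi_squeeze_tendsto_zero:
  assumes "\<forall>n. t n > 0" and "\<And>n. \<phi> (t n) \<le> u n" and "u \<longlonglongrightarrow> K\<^sup>2"
  shows "t \<longlonglongrightarrow> 0"
proof (rule phi_cond[OF assms(1)])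
  have "K\<^sup>2 \<le> \<phi> (t n)" for n
    using phi_range[of "t n"] assms(1) by simp
  then show "(\<lambda>n. \<phi> (t n)) \<longlonglongrightarrow> K\<^sup>2"
    by (intro tendsto_sandwich[OF _ _ tendsto_const assms(3)] always_eventually allI)
      (use assms(2) in auto)
qed

lemma phi_recursion_not_bounded_below:
  assumes e: "e \<longlonglongrightarrow> 0" and "\<epsilon> > 0" and e_nonneg: "\<And>N. e N \<ge> 0"
    and upper: "\<And>N. a N \<le> e N + K\<^sup>2 * t N" and lower: "\<And>N. \<phi> (t N) * t N \<le> a N"
  shows "\<not> (\<forall>N. \<epsilon> \<le> a N)"
proof
  assume far: "\<forall>N. \<epsilon> \<le> a N"
  obtain N0 where e_small: "\<And>N. N \<ge> N0 \<Longrightarrow> e N < \<epsilon> / 2"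
    using order_tendstoD(2)[OF e, of "\<epsilon> / 2"] \<open>\<epsilon> > 0\<close> by (auto simp: eventually_sequentially)
  have K2_pos: "K\<^sup>2 > 0" using bml_K2_ge_1 by linarith
  define c where "c = \<epsilon> / (2 * K\<^sup>2)"
  have "c > 0" unfolding c_def using \<open>\<epsilon> > 0\<close> K2_pos by simp
  have t_ge: "c \<le> t N" if "N \<ge> N0" for N
  proof -
    have "\<epsilon> \<le> 2 * K\<^sup>2 * t N" using far[rule_format, of N] upper[of N] e_small[OF that] by linarith
    then show ?thesis unfolding c_def using K2_pos by (simp add: pos_divide_le_eq mult.commute)
  qed
  have phi_le: "\<phi> (t N) \<le> K\<^sup>2 + e N / c" if "N \<ge> N0" for N
  proof -
    have "t N > 0" using t_ge[OF that] \<open>c > 0\<close> by simp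
    have "(\<phi> (t N) - K\<^sup>2) * t N \<le> e N"
      using lower[of N] upper[of N] by (simp add: algebra_simps)
    then have "\<phi> (t N) - K\<^sup>2 \<le> e N / t N" using \<open>t N > 0\<close> by (simp add: pos_le_divide_eq)
    also have "\<dots> \<le> e N / c"
      using t_ge[OF that] \<open>c > 0\<close> e_nonneg by (intro divide_left_mono) auto
    finally show ?thesis by simp
  qed
  have "(\<lambda>n. K\<^sup>2 + e (n + N0) / c) \<longlonglongrightarrow> K\<^sup>2 + 0 / c"
    using LIMSEQ_ignore_initial_segment[OF e] \<open>c > 0\<close> by (intro tendsto_intros) auto
  then have "(\<lambda>n. t (n + N0)) \<longlonglongrightarrow> 0"
    using t_ge \<open>c > 0\<close> phi_le by (intro phi_squeeze_tendsto_zero) (auto intro: less_le_trans)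
  moreover have "\<And>n. c \<le> t (n + N0)" using t_ge by simp
  ultimately have "c \<le> 0" using LIMSEQ_le_const by blast
  with \<open>c > 0\<close> show False by simp
qed

context
  fixes x :: "nat \<Rightarrow> 'a"
  assumes step: "\<And>i j. odd (i + j) \<Longrightarrow>
    \<phi> (D (x (Suc i)) (x (Suc j))) * D (x (Suc i)) (x (Suc j)) \<le> D (x i) (x j)"
begin

lemma consecutive_dist_tendsto_zero: "(\<lambda>n. D (x n) (x (Suc n))) \<longlonglongrightarrow> 0"
proof -
  define d where "d n = D (x n) (x (Suc n))" for n
  have d_step: "\<phi> (d (Suc n)) * d (Suc n) \<le> d n" for n
    using step[of n "Suc n"] unfolding d_def by simp
  have "decseq d"
    using d_step le_phi_mult[OF bml_nonneg] unfolding d_def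
    by (intro decseq_SucI) (meson order_trans)
  then obtain r where r: "d \<longlonglongrightarrow> r" "\<And>n. r \<le> d n"
    using decseq_convergent[of d 0] bml_nonneg unfolding d_def by blast
  have "r = 0"
  proof (rule ccontr)
    assume "r \<noteq> 0"
    moreover have "r \<ge> 0" using LIMSEQ_le_const[OF r(1), of 0] bml_nonneg d_def by auto
    ultimately have "r > 0" by simp
    then have d_pos: "d n > 0" for n using r(2) less_le_trans by blast
    have phi_le_ratio: "\<phi> (d (Suc n)) \<le> d n / d (Suc n)" for n
      using d_step[of n] d_pos[of "Suc n"] by (simp add: pos_le_divide_eq)
    have ratio: "(\<lambda>n. d n / d (Suc n)) \<longlonglongrightarrow> 1"
      using tendsto_divide[OF r(1) LIMSEQ_Suc[OF r(1)]] \<open>r > 0\<close> by simp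
    have "K\<^sup>2 \<le> 1"
      using LIMSEQ_le_const[OF ratio, of "K\<^sup>2"] phi_le_ratio phi_range[OF d_pos]
      by (meson less_le_trans less_imp_le)
    with bml_K2_ge_1 have "(\<lambda>n. d n / d (Suc n)) \<longlonglongrightarrow> K\<^sup>2" using ratio by simp
    then have "(\<lambda>n. d (Suc n)) \<longlonglongrightarrow> 0"
      using d_pos phi_le_ratio by (intro phi_squeeze_tendsto_zero) auto
    with LIMSEQ_Suc[OF r(1)] \<open>r > 0\<close> show False using LIMSEQ_unique by force
  qed
  with r(1) show ?thesis unfolding d_def by simp
qed

lemma odd_dist_eventually_small:
  assumes "\<epsilon> > 0"
  shows "\<exists>N. \<forall>n\<ge>N. \<forall>m\<ge>N. odd (n + m) \<longrightarrow> D (x n) (x m) < \<epsilon>"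
proof (rule ccontr)
  assume "\<not> ?thesis"
  then obtain p q where pq: "\<And>N. N \<le> p N" "\<And>N. N \<le> q N" "\<And>N. odd (p N + q N)"
    and far: "\<And>N. \<epsilon> \<le> D (x (p N)) (x (q N))"
    by (simp add: not_less) metis
  define t where "t N = D (x (Suc (p N))) (x (Suc (q N)))" for N
  define e where "e N = K * D (x (p N)) (x (Suc (p N))) + K\<^sup>2 * D (x (Suc (q N))) (x (q N))" for N
  have "filterlim p sequentially sequentially" "filterlim q sequentially sequentially"
    using pq by (auto intro: filterlim_at_top_mono[OF filterlim_ident])
  then have "e \<longlonglongrightarrow> K * 0 + K\<^sup>2 * 0"
    unfolding e_def using consecutive_dist_tendsto_zero
    by (intro tendsto_intros) (auto simp: bml_sym intro: filterlim_compose)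
  then have "e \<longlonglongrightarrow> 0" by simp
  moreover have "e N \<ge> 0" for N
    unfolding e_def using bml_nonneg bml_K_ge_1 by simp
  moreover have "D (x (p N)) (x (q N)) \<le> e N + K\<^sup>2 * t N" for N
    using bml_quadrangle[of "x (p N)" "x (q N)" "x (Suc (p N))" "x (Suc (q N))"]
    unfolding t_def e_def by (simp add: algebra_simps)
  moreover have "\<phi> (t N) * t N \<le> D (x (p N)) (x (q N))" for N
    using step[OF pq(3)[of N]] unfolding t_def .
  ultimately have "\<not> (\<forall>N. \<epsilon> \<le> D (x (p N)) (x (q N)))"
    by (rule phi_recursion_not_bounded_below[OF _ \<open>\<epsilon> > 0\<close>])
  with far show False by blast
qed

lemma bml_double_limit_zero: "bml_double_limit D x 0"
  unfolding bml_double_limit_def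
proof (intro allI impI)
  fix \<epsilon> :: real
  assume "\<epsilon> > 0"
  define \<delta> where "\<delta> = \<epsilon> / (2 * K)"
  have "\<delta> > 0" and K_\<delta>: "K * (\<delta> + \<delta>) = \<epsilon>"
    using \<open>\<epsilon> > 0\<close> bml_K_ge_1 unfolding \<delta>_def by (auto simp: field_simps)
  have "\<delta> \<le> \<epsilon>" using \<open>\<epsilon> > 0\<close> bml_K_ge_1 unfolding \<delta>_def by (simp add: field_simps)
  obtain N1 where N1: "\<And>n m. N1 \<le> n \<Longrightarrow> N1 \<le> m \<Longrightarrow> odd (n + m) \<Longrightarrow> D (x n) (x m) < \<delta>"
    using odd_dist_eventually_small[OF \<open>\<delta> > 0\<close>] by blast
  obtain N2 where N2: "\<And>n. N2 \<le> n \<Longrightarrow> D (x n) (x (Suc n)) < \<delta>"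
    using order_tendstoD(2)[OF consecutive_dist_tendsto_zero \<open>\<delta> > 0\<close>]
    by (auto simp: eventually_sequentially)
  have "D (x n) (x m) < \<epsilon>" if "max N1 N2 \<le> n" "max N1 N2 \<le> m" for n m
  proof (cases "odd (n + m)")
    case True
    then show ?thesis using N1 that \<open>\<delta> \<le> \<epsilon>\<close> by fastforce
  next
    case False
    have "D (x n) (x m) \<le> K * (D (x n) (x (Suc m)) + D (x (Suc m)) (x m))"
      by (rule bml_triangle)
    also have "\<dots> < K * (\<delta> + \<delta>)"
      using N1[of n "Suc m"] N2[of m] that False bml_K_ge_1
      by (intro mult_strict_left_mono add_strict_mono) (auto simp: bml_sym)
    finally show ?thesis using K_\<delta> by simp
  qed
  then show "\<exists>N. \<forall>n m. N \<le> n \<and> N \<le> m \<longrightarrow> \<bar>D (x n) (x m) - 0\<bar> < \<epsilon>"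
    using bml_nonneg by (intro exI[of _ "max N1 N2"]) auto
qed

end

end

end

theorem theorem2p4:
  fixes D :: "'a \<Rightarrow> 'a \<Rightarrow> real" and K :: real
    and \<phi> :: "real \<Rightarrow> real" and S T :: "'a \<Rightarrow> 'a"
  assumes bml: "b_metric_like D K"
    and complete: "bml_complete D"
    and phi_range: "\<And>t. t > 0 \<Longrightarrow> \<phi> t > K\<^sup>2"
    and phi_cond: "\<And>tt :: nat \<Rightarrow> real. (\<forall>n. tt n > 0) \<Longrightarrow>
                     (\<lambda>n. \<phi> (tt n)) \<longlonglongrightarrow> K\<^sup>2 \<Longrightarrow> tt \<longlonglongrightarrow> 0"
    and onto_S: "surj S" and onto_T: "surj T"
    and contr: "\<And>x y. D x y > 0 \<Longrightarrow> D (T x) (S y) \<ge> \<phi> (D x y) * D x y"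
  shows "\<exists>!x. T x = x \<and> S x = x"
proof -
  note bml_phi = bml phi_range phi_cond
  have expand: "\<phi> (D a b) * D a b \<le> D (T a) (S b)" for a b
    using contr[of a b] bml_nonneg[OF bml, of a b] bml_nonneg[OF bml, of "T a" "S b"]
    by (cases "D a b = 0") auto
  obtain x where T: "\<And>n. even n \<Longrightarrow> T (x (Suc n)) = x n"
    and S: "\<And>n. odd n \<Longrightarrow> S (x (Suc n)) = x n"
    using alternating_preimage_seq[OF onto_T onto_S] by blast
  have step: "\<phi> (D (x (Suc i)) (x (Suc j))) * D (x (Suc i)) (x (Suc j)) \<le> D (x i) (x j)"
    if "odd (i + j)" for i j
    using alternating_preimage_step[OF bml, where f = "\<lambda>t. \<phi> t * t" and T = T and S = S and x = x,
      OF expand T S that] .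
  have "bml_double_limit D x 0"
    using bml_double_limit_zero[where x = x, OF bml_phi step] .
  moreover from this obtain z where "bml_double_limit D x (D z z)" and "bml_converges D x z"
    using complete unfolding bml_complete_def bml_cauchy_def by blast
  ultimately have lim: "(\<lambda>n. D (x n) z) \<longlonglongrightarrow> 0"
    using bml_double_limit_unique unfolding bml_converges_def by metis
  have "D a b \<le> D (T a) (S b)" for a b
    using le_phi_mult[OF bml_phi bml_nonneg[OF bml, of a b]] expand[of a b] by (rule order_trans)
  then have "T z = z" and "S z = z"
    using fixed_point_of_limit[OF bml _ onto_T onto_S T S lim] by blast+
  moreover have "u = w" if "T u = u" "S w = w" for u w
    using phi_mult_le_self_imp_zero[OF bml_phi bml_nonneg[OF bml]] expand[of u w] that
      bml_eq_0D[OF bml] by simp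
  ultimately show ?thesis by (intro ex1I[of _ z]) auto
qed

end
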